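(* Let $Z\in\mathfrak m$. (1) The map $\mathrm{ad}_\Upsilon\circ(\mathrm{Ad}_{\exp Z}-\mathrm{Ad}_{\exp(-Z)})$, restricted to $\mathfrak m$, is identically zero. (2) As maps $\mathfrak m\to\mathfrak m$, $S_ZJS_Z=\frac12\,\mathrm{ad}_{\left((\mathrm{Ad}_{\exp Z}+\mathrm{Ad}_{\exp(-Z)})\Upsilon\right)}$, where $S_Z=\sum_{n\ge0}\frac{\mathrm{ad}_Z^{2n}}{(2n)!}$.
   Context: Let $G$ be a simple complex algebraic group with Lie algebra $\mathfrak g$, with an algebraic involution whose differential gives the $\pm1$-eigenspace decomposition $\mathfrak g=\mathfrak k\oplus\mathfrak m$, arising from an irreducible Hermitian symmetric space: $\Upsilon$ lies in the center of $\mathfrak k$ and $\mathrm{ad}_\Upsilon$ has eigenvalues $\pm i$ on $\mathfrak m$ (so $\mathrm{ad}_\Upsilon$ vanishes on $\mathfrak k$); $J=\mathrm{ad}_\Upsilon|_{\mathfrak m}$. *)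

theory Defs
  imports "HOL-Analysis.Analysis"
begin

text \<open>The complex Lie algebra g is modelled as the finite-dimensional complex vector space
  complex^'n (coordinates w.r.t. a basis) with a bracket br.\<close>

definition complex_lie_algebra :: "(complex^'n \<Rightarrow> complex^'n \<Rightarrow> complex^'n) \<Rightarrow> bool" where
  "complex_lie_algebra br \<longleftrightarrow>
     (\<forall>a b x y z. br (a *s x + b *s y) z = a *s br x z + b *s br y z) \<and>
     (\<forall>x y. br x y = - br y x) \<and>
     (\<forall>x y z. br x (br y z) + br y (br z x) + br z (br x y) = 0)"

definition lie_ideal :: "(complex^'n \<Rightarrow> complex^'n \<Rightarrow> complex^'n) \<Rightarrow> (complex^'n) set \<Rightarrow> bool" where
  "lie_ideal br I \<longleftrightarrow> 0 \<in> I \<and> (\<forall>x\<in>I. \<forall>y\<in>I. x + y \<in> I) \<and> (\<forall>c. \<forall>x\<in>I. c *s x \<in> I) \<and>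
     (\<forall>x. \<forall>y\<in>I. br x y \<in> I)"

definition simple_lie_algebra :: "(complex^'n \<Rightarrow> complex^'n \<Rightarrow> complex^'n) \<Rightarrow> bool" where
  "simple_lie_algebra br \<longleftrightarrow> complex_lie_algebra br \<and> (\<exists>x y. br x y \<noteq> 0) \<and>
     (\<forall>I. lie_ideal br I \<longrightarrow> I = {0} \<or> I = UNIV)"

text \<open>A Lie algebra involution (differential of an algebraic involution of G).\<close>
definition lie_involution :: "(complex^'n \<Rightarrow> complex^'n \<Rightarrow> complex^'n) \<Rightarrow> (complex^'n \<Rightarrow> complex^'n) \<Rightarrow> bool" where
  "lie_involution br \<sigma> \<longleftrightarrow>
     (\<forall>a b x y. \<sigma> (a *s x + b *s y) = a *s \<sigma> x + b *s \<sigma> y) \<and>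
     (\<forall>x. \<sigma> (\<sigma> x) = x) \<and> (\<forall>x y. \<sigma> (br x y) = br (\<sigma> x) (\<sigma> y))"

text \<open>Ad_{exp Z} = exp(ad_Z), as the exponential series of the linear map ad_Z.\<close>
definition Ad_exp :: "(complex^'n \<Rightarrow> complex^'n \<Rightarrow> complex^'n) \<Rightarrow> complex^'n \<Rightarrow> complex^'n \<Rightarrow> complex^'n" where
  "Ad_exp br Z X = (\<Sum>k. ((br Z) ^^ k) X /\<^sub>R fact k)"

definition S_op :: "(complex^'n \<Rightarrow> complex^'n \<Rightarrow> complex^'n) \<Rightarrow> complex^'n \<Rightarrow> complex^'n \<Rightarrow> complex^'n" where
  "S_op br Z X = (\<Sum>k. ((br Z) ^^ (2*k)) X /\<^sub>R fact (2*k))"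

end

theory Submission
  imports Defs
begin

text \<open>Write \<open>Ad_{\<pm>Z} = exp(\<pm>ad_Z)\<close>, so that \<open>S_Z = (Ad_Z + Ad_{-Z})/2\<close>. Since the involution
  fixes \<open>k\<close>, acts by \<open>-1\<close> on \<open>m\<close> and \<open>Z \<in> m\<close>, the vector \<open>ad_Z^n X\<close> lies in \<open>k\<close> for odd \<open>n\<close> and
  \<open>X \<in> m\<close>. As \<open>ad_\<Upsilon>\<close> kills \<open>k\<close>, it kills the odd part \<open>(Ad_Z - Ad_{-Z}) X\<close> of the exponential
  series, which is (1); hence \<open>ad_\<Upsilon> S_Z X = ad_\<Upsilon> Ad_Z X = ad_\<Upsilon> Ad_{-Z} X\<close> and
  \<open>S_Z J S_Z X = (Ad_Z ad_\<Upsilon> Ad_{-Z} X + Ad_{-Z} ad_\<Upsilon> Ad_Z X)/2\<close>. Being exponentials of the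
  derivations \<open>\<pm>ad_Z\<close> (Leibniz rule and Cauchy product), \<open>Ad_{\<pm>Z}\<close> are mutually inverse Lie
  algebra automorphisms, so \<open>Ad_{\<pm>Z} ad_\<Upsilon> Ad_{\<mp>Z} = ad_{Ad_{\<pm>Z} \<Upsilon>}\<close>, which is (2).\<close>

definition op_exp :: "('a::real_normed_vector \<Rightarrow> 'a) \<Rightarrow> 'a \<Rightarrow> 'a" where
  "op_exp D x = (\<Sum>n. (D ^^ n) x /\<^sub>R fact n)"

lemma linear_funpow:
  fixes D :: "'a::real_vector \<Rightarrow> 'a"
  assumes "linear D"
  shows "linear (D ^^ n)"
  using assms by (induction n) (simp_all add: linear_compose linear_id)

lemma norm_funpow_le_onorm:
  fixes D :: "'a::real_normed_vector \<Rightarrow> 'a"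
  assumes "bounded_linear D"
  shows "norm ((D ^^ n) x) \<le> onorm D ^ n * norm x"
proof (induction n)
  case 0
  then show ?case by simp
next
  case (Suc n)
  have "norm ((D ^^ Suc n) x) \<le> onorm D * norm ((D ^^ n) x)"
    using onorm[OF assms] by simp
  also have "\<dots> \<le> onorm D * (onorm D ^ n * norm x)"
    using Suc.IH onorm_pos_le[OF assms] by (rule mult_left_mono)
  finally show ?case
    by (simp add: mult.assoc)
qed

lemma summable_norm_op_exp_series:
  fixes D :: "'a::real_normed_vector \<Rightarrow> 'a"
  assumes "bounded_linear D"
  shows "summable (\<lambda>n. norm ((D ^^ n) x /\<^sub>R fact n))"
proof (rule summable_comparison_test')
  show "summable (\<lambda>n. onorm D ^ n * norm x / fact n)"
    using summable_mult2[OF summable_exp[of "onorm D"], of "norm x"]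
    by (simp add: field_simps)
  show "norm (norm ((D ^^ n) x /\<^sub>R fact n)) \<le> onorm D ^ n * norm x / fact n" for n
    using norm_funpow_le_onorm[OF assms, of n x]
    by (simp add: divide_inverse_commute[symmetric] divide_right_mono)
qed

lemma op_exp_sums:
  fixes D :: "'a::banach \<Rightarrow> 'a"
  assumes "bounded_linear D"
  shows "(\<lambda>n. (D ^^ n) x /\<^sub>R fact n) sums op_exp D x"
  unfolding op_exp_def
  using summable_norm_cancel[OF summable_norm_op_exp_series[OF assms]] by (rule summable_sums)

lemma funpow_uminus:
  fixes D :: "'a::real_vector \<Rightarrow> 'a"
  assumes "linear D"
  shows "((\<lambda>y. - D y) ^^ n) x = (-1) ^ n *\<^sub>R (D ^^ n) x"
  by (induction n) (simp_all add: linear_scale[OF assms] linear_neg[OF assms])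

lemma op_exp_uminus_sums:
  fixes D :: "'a::banach \<Rightarrow> 'a"
  assumes "bounded_linear D"
  shows "(\<lambda>n. ((-1) ^ n *\<^sub>R (D ^^ n) x) /\<^sub>R fact n) sums op_exp (\<lambda>y. - D y) x"
  using op_exp_sums[OF bounded_linear_minus[OF assms], of x]
  by (simp add: funpow_uminus bounded_linear.linear[OF assms])

lemma op_exp_even_part:
  fixes D :: "'a::banach \<Rightarrow> 'a"
  assumes "bounded_linear D"
  shows "(\<Sum>k. (D ^^ (2 * k)) x /\<^sub>R fact (2 * k)) =
    (1/2) *\<^sub>R (op_exp D x + op_exp (\<lambda>y. - D y) x)"
proof -
  let ?f = "\<lambda>n. (D ^^ n) x /\<^sub>R fact n + ((-1) ^ n *\<^sub>R (D ^^ n) x) /\<^sub>R fact n"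
  have "?f sums (op_exp D x + op_exp (\<lambda>y. - D y) x)"
    using op_exp_sums[OF assms] op_exp_uminus_sums[OF assms] by (rule sums_add)
  moreover have "?f n = 0" if "n \<notin> range (\<lambda>k. 2 * k)" for n
  proof -
    from that have "odd n"
      by (metis evenE rangeI)
    then show ?thesis
      by simp
  qed
  ultimately have "(\<lambda>k. ?f (2 * k)) sums (op_exp D x + op_exp (\<lambda>y. - D y) x)"
    by (subst sums_mono_reindex) (auto simp: strict_mono_def)
  from sums_scaleR_right[OF this, of "1/2"] show ?thesis
    by (simp add: sums_iff flip: scaleR_2)
qed

lemma op_exp_uminus_eq_if_odd_vanish:
  fixes D :: "'a::banach \<Rightarrow> 'a"
  assumes D: "bounded_linear D" and T: "bounded_linear T"
    and odd_vanish: "\<And>n. odd n \<Longrightarrow> T ((D ^^ n) x) = 0"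
  shows "T (op_exp D x) = T (op_exp (\<lambda>y. - D y) x)"
proof -
  interpret T: bounded_linear T by (fact T)
  let ?f = "\<lambda>n. (D ^^ n) x /\<^sub>R fact n - ((-1) ^ n *\<^sub>R (D ^^ n) x) /\<^sub>R fact n"
  have "(\<lambda>n. T (?f n)) sums T (op_exp D x - op_exp (\<lambda>y. - D y) x)"
    using op_exp_sums[OF D] op_exp_uminus_sums[OF D] by (intro T.sums sums_diff)
  moreover have "T (?f n) = 0" for n
    using odd_vanish[of n] by (cases "even n") (simp_all add: T.add T.scaleR)
  ultimately show ?thesis
    by (simp add: sums_iff T.diff)
qed

lemma Cauchy_product_sums_bilinear:
  fixes a :: "nat \<Rightarrow> 'a::banach" and b :: "nat \<Rightarrow> 'b::banach"
    and h :: "'a \<Rightarrow> 'b \<Rightarrow> 'c::banach"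
  assumes h: "bounded_bilinear h"
    and a: "summable (\<lambda>k. norm (a k))" and b: "summable (\<lambda>k. norm (b k))"
  shows "(\<lambda>k. \<Sum>i\<le>k. h (a i) (b (k - i))) sums h (\<Sum>k. a k) (\<Sum>k. b k)"
proof -
  interpret h: bounded_bilinear h by (fact h)
  obtain K where K: "K > 0" "\<And>x y. norm (h x y) \<le> norm x * norm y * K"
    using h.pos_bounded by blast
  have has_sum_series: "(f has_sum (\<Sum>k. f k)) UNIV" if "summable (\<lambda>k. norm (f k))"
    for f :: "nat \<Rightarrow> 'd::banach"
    using norm_summable_imp_has_sum[OF that summable_sums[OF summable_norm_cancel[OF that]]] .
  let ?g = "\<lambda>(i, j). h (a i) (b j)"
  let ?bound = "\<lambda>(i, j). norm (a i) * norm (b j) * K"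
  have "?bound summable_on UNIV \<times> UNIV"
  proof (rule summable_on_SigmaI)
    show "((\<lambda>j. ?bound (i, j)) has_sum norm (a i) * (\<Sum>j. norm (b j)) * K) UNIV" for i
      using has_sum_series[of "\<lambda>j. norm (b j)"] b
      by (simp add: has_sum_cmult_right has_sum_cmult_left)
    show "(\<lambda>i. norm (a i) * (\<Sum>j. norm (b j)) * K) summable_on UNIV"
      using a by (intro summable_on_cmult_left norm_summable_imp_summable_on) simp
    show "0 \<le> ?bound (i, j)" for i j
      using K(1) by simp
  qed
  then have "?g abs_summable_on UNIV \<times> UNIV"
    by (rule Infinite_Sum.abs_summable_on_comparison_test') (simp add: case_prod_beta K(2))
  then have "?g summable_on UNIV \<times> UNIV"
    by (rule abs_summable_summable)
  moreover have "((\<lambda>j. ?g (i, j)) has_sum h (a i) (\<Sum>k. b k)) UNIV" for i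
    using has_sum_bounded_linear[OF h.bounded_linear_right has_sum_series[OF b]] by simp
  moreover have "((\<lambda>i. h (a i) (\<Sum>k. b k)) has_sum h (\<Sum>k. a k) (\<Sum>k. b k)) UNIV"
    using has_sum_bounded_linear[OF h.bounded_linear_left has_sum_series[OF a]] .
  ultimately have "(?g has_sum h (\<Sum>k. a k) (\<Sum>k. b k)) (UNIV \<times> UNIV)"
    by (intro has_sum_SigmaI) auto
  \<comment> \<open>Regroup the terms along the anti-diagonals \<open>i + j = k\<close>.\<close>
  also have "?this \<longleftrightarrow> ((\<lambda>(k, i). h (a i) (b (k - i))) has_sum h (\<Sum>k. a k) (\<Sum>k. b k))
      (SIGMA k:UNIV. {..k})"
    by (rule has_sum_reindex_bij_witness[where i = "\<lambda>(k, i). (i, k - i)"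
          and j = "\<lambda>(i, j). (i + j, i)"]) auto
  finally show ?thesis
    by (intro has_sum_imp_sums has_sum_SigmaD[where g = "\<lambda>k. \<Sum>i\<le>k. h (a i) (b (k - i))"]) auto
qed

lemma sum_binomial_Pascal:
  fixes F :: "nat \<Rightarrow> nat \<Rightarrow> 'a::real_vector"
  shows "(\<Sum>k\<le>n. real (n choose k) *\<^sub>R (F (Suc k) (n - k) + F k (Suc (n - k)))) =
    (\<Sum>k\<le>Suc n. real (Suc n choose k) *\<^sub>R F k (Suc n - k))"
proof -
  have "(\<Sum>k\<le>n. real (n choose k) *\<^sub>R F k (Suc (n - k))) =
      (\<Sum>k\<le>Suc n. real (n choose k) *\<^sub>R F k (Suc n - k))"
    by (simp add: Suc_diff_le binomial_eq_0)
  also have "\<dots> = F 0 (Suc n) + (\<Sum>k\<le>n. real (n choose Suc k) *\<^sub>R F (Suc k) (n - k))"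
    by (subst sum.atMost_Suc_shift) simp
  finally have shifted: "(\<Sum>k\<le>n. real (n choose k) *\<^sub>R F k (Suc (n - k))) =
      F 0 (Suc n) + (\<Sum>k\<le>n. real (n choose Suc k) *\<^sub>R F (Suc k) (n - k))" .
  have "(\<Sum>k\<le>Suc n. real (Suc n choose k) *\<^sub>R F k (Suc n - k)) =
      F 0 (Suc n) + (\<Sum>k\<le>n. real (Suc n choose Suc k) *\<^sub>R F (Suc k) (n - k))"
    by (subst sum.atMost_Suc_shift) simp
  also have "\<dots> = (\<Sum>k\<le>n. real (n choose k) *\<^sub>R F (Suc k) (n - k)) +
      (\<Sum>k\<le>n. real (n choose k) *\<^sub>R F k (Suc (n - k)))"
    by (simp add: shifted scaleR_add_left sum.distrib)
  finally show ?thesis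
    by (simp add: scaleR_add_right sum.distrib)
qed

lemma funpow_derivation_Leibniz:
  fixes D\<^sub>3 :: "'c::real_vector \<Rightarrow> 'c"
  assumes "linear D\<^sub>3" and derivation: "\<And>x y. D\<^sub>3 (h x y) = h (D\<^sub>1 x) y + h x (D\<^sub>2 y)"
  shows "(D\<^sub>3 ^^ n) (h x y) =
    (\<Sum>k\<le>n. real (n choose k) *\<^sub>R h ((D\<^sub>1 ^^ k) x) ((D\<^sub>2 ^^ (n - k)) y))"
proof (induction n arbitrary: x y)
  case 0
  then show ?case by simp
next
  case (Suc n)
  have "(D\<^sub>3 ^^ Suc n) (h x y) = (D\<^sub>3 ^^ n) (h (D\<^sub>1 x) y) + (D\<^sub>3 ^^ n) (h x (D\<^sub>2 y))"
    by (simp add: derivation linear_add[OF linear_funpow[OF assms(1)]] funpow_Suc_right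
        del: funpow.simps)
  also have "\<dots> = (\<Sum>k\<le>n. real (n choose k) *\<^sub>R
      (h ((D\<^sub>1 ^^ Suc k) x) ((D\<^sub>2 ^^ (n - k)) y) + h ((D\<^sub>1 ^^ k) x) ((D\<^sub>2 ^^ Suc (n - k)) y)))"
    by (simp add: Suc.IH scaleR_add_right sum.distrib funpow_Suc_right del: funpow.simps)
  also have "\<dots> = (\<Sum>k\<le>Suc n. real (Suc n choose k) *\<^sub>R h ((D\<^sub>1 ^^ k) x) ((D\<^sub>2 ^^ (Suc n - k)) y))"
    by (rule sum_binomial_Pascal)
  finally show ?case .
qed

lemma op_exp_derivation:
  fixes h :: "'a::banach \<Rightarrow> 'b::banach \<Rightarrow> 'c::banach"
  assumes h: "bounded_bilinear h"
    and D\<^sub>1: "bounded_linear D\<^sub>1" and D\<^sub>2: "bounded_linear D\<^sub>2" and D\<^sub>3: "linear D\<^sub>3"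
    and derivation: "\<And>x y. D\<^sub>3 (h x y) = h (D\<^sub>1 x) y + h x (D\<^sub>2 y)"
  shows "op_exp D\<^sub>3 (h x y) = h (op_exp D\<^sub>1 x) (op_exp D\<^sub>2 y)"
proof -
  interpret h: bounded_bilinear h by (fact h)
  have "(\<lambda>n. \<Sum>k\<le>n. h ((D\<^sub>1 ^^ k) x /\<^sub>R fact k) ((D\<^sub>2 ^^ (n - k)) y /\<^sub>R fact (n - k)))
      sums h (op_exp D\<^sub>1 x) (op_exp D\<^sub>2 y)"
    unfolding op_exp_def
    by (intro Cauchy_product_sums_bilinear h summable_norm_op_exp_series D\<^sub>1 D\<^sub>2)
  moreover have "(D\<^sub>3 ^^ n) (h x y) /\<^sub>R fact n =
      (\<Sum>k\<le>n. h ((D\<^sub>1 ^^ k) x /\<^sub>R fact k) ((D\<^sub>2 ^^ (n - k)) y /\<^sub>R fact (n - k)))" for n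
  proof -
    have "(D\<^sub>3 ^^ n) (h x y) /\<^sub>R fact n =
        (\<Sum>k\<le>n. (real (n choose k) / fact n) *\<^sub>R h ((D\<^sub>1 ^^ k) x) ((D\<^sub>2 ^^ (n - k)) y))"
      unfolding funpow_derivation_Leibniz[where h = h and D\<^sub>1 = D\<^sub>1 and D\<^sub>2 = D\<^sub>2, OF D\<^sub>3 derivation]
      by (simp add: scaleR_sum_right divide_inverse_commute)
    also have "\<dots> = (\<Sum>k\<le>n. h ((D\<^sub>1 ^^ k) x /\<^sub>R fact k) ((D\<^sub>2 ^^ (n - k)) y /\<^sub>R fact (n - k)))"
    proof (rule sum.cong)
      fix k
      assume "k \<in> {..n}"
      then have "real (n choose k) / fact n = inverse (fact k) * inverse (fact (n - k))"
        by (simp add: binomial_fact field_simps)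
      then show "(real (n choose k) / fact n) *\<^sub>R h ((D\<^sub>1 ^^ k) x) ((D\<^sub>2 ^^ (n - k)) y) =
          h ((D\<^sub>1 ^^ k) x /\<^sub>R fact k) ((D\<^sub>2 ^^ (n - k)) y /\<^sub>R fact (n - k))"
        by (simp add: h.scaleR_left h.scaleR_right)
    qed simp
    finally show ?thesis .
  qed
  ultimately show ?thesis
    unfolding op_exp_def by (simp add: sums_iff)
qed

lemma op_exp_zero: "op_exp (\<lambda>_. 0) x = x"
proof -
  have "(\<lambda>n. ((\<lambda>_. 0) ^^ n) x /\<^sub>R fact n) = (\<lambda>n. if n = 0 then x /\<^sub>R fact n else 0)"
    by (auto simp: fun_eq_iff gr0_conv_Suc)
  then show ?thesis
    using sums_single[of 0 "\<lambda>n. x /\<^sub>R fact n"] by (simp add: op_exp_def sums_iff)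
qed

lemma op_exp_uminus_inverse:
  fixes D :: "'a::banach \<Rightarrow> 'a"
  assumes D: "bounded_linear D"
  shows "op_exp D (op_exp (\<lambda>y. - D y) x) = x"
proof -
  let ?R = "\<lambda>F :: 'a \<Rightarrow>\<^sub>L 'a. F o\<^sub>L Blinfun D"
  have R: "bounded_linear ?R"
    by (rule bounded_bilinear.bounded_linear_left[OF bounded_bilinear_blinfun_compose])
  have R_power: "blinfun_apply ((?R ^^ n) id_blinfun) y = (D ^^ n) y" for n y
    by (induction n arbitrary: y) (simp_all add: bounded_linear_Blinfun_apply[OF D] funpow_swap1)
  have exp_R: "blinfun_apply (op_exp ?R id_blinfun) y = op_exp D y" for y
  proof -
    have "(\<lambda>n. blinfun_apply ((?R ^^ n) id_blinfun /\<^sub>R fact n) y) sums blinfun_apply (op_exp ?R id_blinfun) y"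
      using op_exp_sums[OF R]
      by (rule bounded_linear.sums[OF bounded_bilinear.bounded_linear_left[OF bounded_bilinear_blinfun_apply]])
    then show ?thesis
      by (simp add: R_power blinfun.scaleR_left op_exp_def sums_iff)
  qed
  \<comment> \<open>Evaluation \<open>(F, y) \<mapsto> F y\<close> turns \<open>(F \<mapsto> F \<circ> D, -D)\<close> into a derivation over the zero map.\<close>
  have "op_exp (\<lambda>_. 0) (blinfun_apply id_blinfun x) =
      blinfun_apply (op_exp ?R id_blinfun) (op_exp (\<lambda>y. - D y) x)"
    by (rule op_exp_derivation[OF bounded_bilinear_blinfun_apply R bounded_linear_minus[OF D]
          bounded_linear.linear[OF bounded_linear_zero]])
      (simp add: bounded_linear_Blinfun_apply[OF D] blinfun.minus_right)
  then show ?thesis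
    by (simp add: op_exp_zero exp_R)
qed

lemma scaleR_eq_of_real_smult: "r *\<^sub>R (x :: complex^'n) = complex_of_real r *s x"
  by (simp add: vec_eq_iff complex_eq_iff)

lemma Ad_exp_eq_op_exp: "Ad_exp br Z = op_exp (br Z)"
  by (simp add: fun_eq_iff Ad_exp_def op_exp_def)

lemma lie_involution_bracket: "lie_involution br \<sigma> \<Longrightarrow> \<sigma> (br x y) = br (\<sigma> x) (\<sigma> y)"
  unfolding lie_involution_def by blast

context
  fixes br :: "complex^'n \<Rightarrow> complex^'n \<Rightarrow> complex^'n"
  assumes lie: "complex_lie_algebra br"
begin

lemma bracket_linear_left: "br (a *s x + b *s y) z = a *s br x z + b *s br y z"
  using lie unfolding complex_lie_algebra_def by blast

lemma bracket_antisym: "br x y = - br y x"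
  using lie unfolding complex_lie_algebra_def by blast

lemma bracket_Jacobi: "br x (br y z) + br y (br z x) + br z (br x y) = 0"
  using lie unfolding complex_lie_algebra_def by blast

lemma bracket_add_left: "br (x + y) z = br x z + br y z"
  using bracket_linear_left[of 1 x 1 y z] by simp

lemma bracket_smult_left: "br (c *s x) z = c *s br x z"
  using bracket_linear_left[of c x 0 0 z] by simp

lemma bracket_add_right: "br z (x + y) = br z x + br z y"
  by (simp add: bracket_antisym[of z] bracket_add_left)

lemma bracket_smult_right: "br z (c *s x) = c *s br z x"
  by (simp add: bracket_antisym[of z] bracket_smult_left)

lemma bracket_uminus_left: "br (- x) = (\<lambda>y. - br x y)"
  using bracket_smult_left[of "-1" x] by (simp add: fun_eq_iff)

lemma bracket_uminus_right: "br z (- x) = - br z x"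
  using bracket_smult_right[of z "-1" x] by simp

lemma bracket_bounded_bilinear: "bounded_bilinear br"
proof -
  have "bilinear br"
    unfolding bilinear_def
    by (auto intro!: linearI simp: bracket_add_left bracket_add_right scaleR_eq_of_real_smult
        bracket_smult_left bracket_smult_right)
  then show ?thesis
    by (simp add: bilinear_conv_bounded_bilinear)
qed

lemma bounded_linear_bracket: "bounded_linear (br z)"
  by (rule bounded_bilinear.bounded_linear_right[OF bracket_bounded_bilinear])

lemma bracket_derivation: "br z (br x y) = br (br z x) y + br x (br z y)"
  using bracket_Jacobi[of z x y] bracket_antisym[of y z] bracket_antisym[of y "br z x"]
  by (simp add: bracket_uminus_right algebra_simps)

lemma Ad_exp_bracket: "Ad_exp br Z (br x y) = br (Ad_exp br Z x) (Ad_exp br Z y)"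
  unfolding Ad_exp_eq_op_exp
  using bracket_bounded_bilinear bounded_linear_bracket bounded_linear_bracket
    bounded_linear.linear[OF bounded_linear_bracket] bracket_derivation
  by (rule op_exp_derivation)

lemma Ad_exp_uminus_inverse: "Ad_exp br Z (Ad_exp br (- Z) x) = x"
  by (simp add: Ad_exp_eq_op_exp bracket_uminus_left op_exp_uminus_inverse bounded_linear_bracket)

lemma S_op_eq_half_Ad_exp: "S_op br Z x = (1/2) *\<^sub>R (Ad_exp br Z x + Ad_exp br (- Z) x)"
  unfolding S_op_def Ad_exp_eq_op_exp bracket_uminus_left
  by (rule op_exp_even_part[OF bounded_linear_bracket])

lemma lie_involution_funpow_bracket:
  assumes inv: "lie_involution br \<sigma>" and Z: "\<sigma> Z = - Z" and X: "\<sigma> X = c *s X"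
  shows "\<sigma> ((br Z ^^ n) X) = ((-1) ^ n * c) *s (br Z ^^ n) X"
proof (induction n)
  case 0
  then show ?case by (simp add: X)
next
  case (Suc n)
  then show ?case
    by (simp add: lie_involution_bracket[OF inv] Z bracket_uminus_left bracket_smult_right)
qed

lemma bracket_Ad_exp_uminus_eq:
  assumes inv: "lie_involution br \<sigma>" and Z: "\<sigma> Z = - Z" and X: "\<sigma> X = - X"
    and U: "\<forall>Y. \<sigma> Y = Y \<longrightarrow> br U Y = 0"
  shows "br U (Ad_exp br Z X) = br U (Ad_exp br (- Z) X)"
  unfolding Ad_exp_eq_op_exp bracket_uminus_left
proof (rule op_exp_uminus_eq_if_odd_vanish[OF bounded_linear_bracket bounded_linear_bracket])
  fix n :: nat
  assume "odd n"
  have "\<sigma> ((br Z ^^ n) X) = ((-1) ^ n * -1) *s (br Z ^^ n) X"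
    using X by (intro lie_involution_funpow_bracket[OF inv Z]) simp
  with \<open>odd n\<close> have "\<sigma> ((br Z ^^ n) X) = (br Z ^^ n) X"
    by simp
  then show "br U ((br Z ^^ n) X) = 0"
    using U by blast
qed

lemma S_op_bracket_S_op:
  assumes inv: "lie_involution br \<sigma>" and Z: "\<sigma> Z = - Z" and X: "\<sigma> X = - X"
    and U: "\<forall>Y. \<sigma> Y = Y \<longrightarrow> br U Y = 0"
  shows "S_op br Z (br U (S_op br Z X)) =
    (1/2 :: complex) *s br (Ad_exp br Z U + Ad_exp br (- Z) U) X"
proof -
  let ?P = "Ad_exp br Z" and ?M = "Ad_exp br (- Z)"
  interpret U: bounded_linear "br U" by (rule bounded_linear_bracket)
  have PM: "br U (?P X) = br U (?M X)"
    using inv Z X U by (rule bracket_Ad_exp_uminus_eq)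
  then have S: "br U (S_op br Z X) = br U (?M X)"
    by (simp add: S_op_eq_half_Ad_exp U.scaleR U.add flip: scaleR_2)
  have "S_op br Z (br U (S_op br Z X)) = (1/2) *\<^sub>R (?P (br U (?M X)) + ?M (br U (?P X)))"
    unfolding S by (simp add: S_op_eq_half_Ad_exp PM)
  also have "\<dots> = (1/2) *\<^sub>R (br (?P U) X + br (?M U) X)"
    using Ad_exp_uminus_inverse[of "- Z" X] by (simp add: Ad_exp_bracket Ad_exp_uminus_inverse)
  also have "\<dots> = (1/2 :: complex) *s br (?P U + ?M U) X"
    by (simp add: bracket_add_left scaleR_eq_of_real_smult)
  finally show ?thesis .
qed

end

theorem lemma4p9:
  fixes br :: "complex^'n \<Rightarrow> complex^'n \<Rightarrow> complex^'n"
    and \<sigma> :: "complex^'n \<Rightarrow> complex^'n"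
    and \<Upsilon> Z :: "complex^'n"
  assumes simple: "simple_lie_algebra br"
    and inv: "lie_involution br \<sigma>"
    and Ups_k: "\<sigma> \<Upsilon> = \<Upsilon>"
    and Ups_center: "\<forall>X. \<sigma> X = X \<longrightarrow> br \<Upsilon> X = 0"
    and eig_decomp: "\<forall>X. \<sigma> X = - X \<longrightarrow>
        (\<exists>A B. X = A + B \<and> \<sigma> A = - A \<and> \<sigma> B = - B \<and>
               br \<Upsilon> A = \<i> *s A \<and> br \<Upsilon> B = (- \<i>) *s B)"
    and eig_plus: "\<exists>A. \<sigma> A = - A \<and> A \<noteq> 0 \<and> br \<Upsilon> A = \<i> *s A"
    and eig_minus: "\<exists>B. \<sigma> B = - B \<and> B \<noteq> 0 \<and> br \<Upsilon> B = (- \<i>) *s B"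
    and Zm: "\<sigma> Z = - Z"
  shows "(\<forall>X. \<sigma> X = - X \<longrightarrow> br \<Upsilon> (Ad_exp br Z X - Ad_exp br (- Z) X) = 0) \<and>
         (\<forall>X. \<sigma> X = - X \<longrightarrow>
            S_op br Z (br \<Upsilon> (S_op br Z X)) =
            (1/2 :: complex) *s br (Ad_exp br Z \<Upsilon> + Ad_exp br (- Z) \<Upsilon>) X)"
proof -
  have lie: "complex_lie_algebra br"
    using simple by (simp add: simple_lie_algebra_def)
  have "br \<Upsilon> (Ad_exp br Z X - Ad_exp br (- Z) X) = 0" if "\<sigma> X = - X" for X
    using bracket_Ad_exp_uminus_eq[OF lie inv Zm that Ups_center]
    by (simp add: linear_diff[OF bounded_linear.linear[OF bounded_linear_bracket[OF lie]]])
  moreover have "S_op br Z (br \<Upsilon> (S_op br Z X)) =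
      (1/2 :: complex) *s br (Ad_exp br Z \<Upsilon> + Ad_exp br (- Z) \<Upsilon>) X" if "\<sigma> X = - X" for X
    using lie inv Zm that Ups_center by (rule S_op_bracket_S_op)
  ultimately show ?thesis
    by blast
qed

end
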